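(* Let $s,r,u\in \mathcal{X}$, $s=(s_1,\dots, s_n)$, $r=(r_1,\dots, r_n)$, $u=(u_1,\dots,u_n)$, lie in pairwise different orbits with $\mathbb{F}_{q^m}=\mathbb{F}_q(r_1)=\mathbb{F}_q(s_1)$. Then there exists $F\in \mathrm{TA}_n(\mathbb{F}_q)$ such that $F([r])=[s]$ and $F([u])=[u]$.
   Context: Fix $m$, a prime power $q$, $n\geq 3$. $\Delta=\mathrm{Gal}(\mathbb{F}_{q^m}:\mathbb{F}_q)$ acts coordinatewise on $\mathbb{F}_{q^m}^n$; $[v]$ denotes the $\Delta$-orbit of $v$, and $\mathcal{X}$ is the union of orbits of size $m$. $\mathrm{TA}_n(\mathbb{F}_q)$ is the tame automorphism group generated by invertible affine maps and triangular maps $(a_1X_1+f_1,\dots,a_nX_n+f_n)$, $a_i\in\mathbb{F}_q^*$, $f_i\in\mathbb{F}_q[X_{i+1},\dots,X_n]$; it acts on orbits since its elements commute with $\Delta$. *)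

theory Defs
  imports "Jordan_Normal_Form.Determinant"
begin

(* The ambient field F_{q^m} is a finite field type 'a with CARD('a) = q^m.
   F_q is its unique subfield of order q, i.e. the fixed field of x \<mapsto> x^q. *)
definition Fq :: "nat \<Rightarrow> 'a::field set" where
  "Fq q = {x. x ^ q = x}"

definition is_subfield :: "'a::field set \<Rightarrow> bool" where
  "is_subfield L \<longleftrightarrow> 0 \<in> L \<and> 1 \<in> L \<and>
     (\<forall>x\<in>L. \<forall>y\<in>L. x + y \<in> L \<and> x * y \<in> L) \<and>
     (\<forall>x\<in>L. - x \<in> L) \<and> (\<forall>x\<in>L. x \<noteq> 0 \<longrightarrow> inverse x \<in> L)"

definition gen_field :: "nat \<Rightarrow> 'a::field set \<Rightarrow> 'a set" where
  "gen_field q S = \<Inter> {L. is_subfield L \<and> Fq q \<subseteq> L \<and> S \<subseteq> L}"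

(* Coordinatewise action of the Galois group Gal(F_{q^m}:F_q) = <x \<mapsto> x^q>
   on points (vectors of dimension n, coordinates indexed 0..n-1). *)
definition gal_orbit :: "nat \<Rightarrow> 'a::field vec \<Rightarrow> 'a vec set" where
  "gal_orbit q v = {map_vec (\<lambda>x. x ^ (q ^ k)) v | k. True}"

definition calX :: "nat \<Rightarrow> nat \<Rightarrow> nat \<Rightarrow> 'a::field vec set" where
  "calX q m n = {v \<in> carrier_vec n. card (gal_orbit q v) = m}"

inductive polyfun :: "nat \<Rightarrow> nat set \<Rightarrow> ('a::field vec \<Rightarrow> 'a) \<Rightarrow> bool"
  for q :: nat and I :: "nat set" where
  pconst: "c \<in> Fq q \<Longrightarrow> polyfun q I (\<lambda>v. c)"
| pvar: "i \<in> I \<Longrightarrow> polyfun q I (\<lambda>v. v $ i)"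
| padd: "polyfun q I f \<Longrightarrow> polyfun q I g \<Longrightarrow> polyfun q I (\<lambda>v. f v + g v)"
| pmult: "polyfun q I f \<Longrightarrow> polyfun q I g \<Longrightarrow> polyfun q I (\<lambda>v. f v * g v)"

(* The tame automorphism group TA_n(F_q), as maps acting on F_{q^m}^n:
   generated by invertible affine maps and triangular maps over F_q
   (coordinates 0..n-1; the i-th component is a_i X_i + f_i(X_{i+1},...,X_{n-1})). *)
inductive tame :: "nat \<Rightarrow> nat \<Rightarrow> ('a::field vec \<Rightarrow> 'a vec) \<Rightarrow> bool"
  for q :: nat and n :: nat where
  affine: "A \<in> carrier_mat n n \<Longrightarrow> det A \<noteq> 0 \<Longrightarrow>
     (\<forall>i<n. \<forall>j<n. A $$ (i, j) \<in> Fq q) \<Longrightarrow>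
     b \<in> carrier_vec n \<Longrightarrow> (\<forall>i<n. b $ i \<in> Fq q) \<Longrightarrow>
     tame q n (\<lambda>v. A *\<^sub>v v + b)"
| triangular: "(\<forall>i<n. a i \<in> Fq q \<and> a i \<noteq> 0 \<and> polyfun q {Suc i..<n} (f i)) \<Longrightarrow>
     tame q n (\<lambda>v. vec n (\<lambda>i. a i * v $ i + f i v))"
| comp: "tame q n F \<Longrightarrow> tame q n G \<Longrightarrow> tame q n (F \<circ> G)"
| inverse: "tame q n F \<Longrightarrow> tame q n (inv_into (carrier_vec n) F)"

end

theory Submission
  imports Defs "HOL-Computational_Algebra.Polynomial" "HOL-Combinatorics.Transposition"
    "HOL-Library.Cardinality" "HOL-Number_Theory.Residues"
begin

text \<open>Call a tame map admissible if it commutes with the Frobenius \<open>x \<mapsto> x\<^sup>q\<close> coordinatewise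
  and fixes \<open>u\<close>; it then maps each orbit \<open>[x]\<close> onto \<open>[F x]\<close> and fixes \<open>[u]\<close>. The elementary
  maps \<open>X\<^sub>i \<mapsto> X\<^sub>i + g\<close>, with \<open>g \<in> \<F>\<^sub>q[X\<^sub>j : j \<noteq> i]\<close> vanishing at \<open>u\<close>, are admissible.
  If \<open>v\<^sub>j\<close> generates \<open>\<F>\<^bsub>q\<^sup>m\<^esub>\<close>, polynomials in \<open>v\<^sub>j\<close> over \<open>\<F>\<^sub>q\<close> take every value, so
  multiplying such a polynomial by one that is \<open>1\<close> at \<open>v\<close> and \<open>0\<close> at \<open>u\<close> changes any other
  coordinate of \<open>v\<close> at will while fixing \<open>u\<close>. For \<open>v \<notin> [u]\<close> such a separating polynomial
  avoiding \<open>X\<^sub>1\<close> or \<open>X\<^sub>2\<close> exists, and with a few such moves \<open>v\<close> is carried to the point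
  \<open>(c, z, z, 0, \<dots>, 0)\<close>, where \<open>c \<in> \<F>\<^sub>q\<close> differs from \<open>u\<^sub>0\<close> and \<open>z = r\<^sub>0\<close>. Doing this for
  \<open>r\<close> and for \<open>s\<close> and composing the first map with the inverse of the second gives \<open>F\<close>.\<close>

section \<open>Finite fields\<close>

lemma card_UNIV_field_ge_2: "card (UNIV :: 'a::{field,finite} set) \<ge> 2"
proof -
  have "card {0, 1::'a} \<le> CARD('a)"
    by (rule card_mono) auto
  then show ?thesis
    by simp
qed

lemma power_card_minus_1_eq_1:
  fixes x :: "'a::{field,finite}"
  assumes "x \<noteq> 0"
  shows "x ^ (CARD('a) - 1) = 1"
proof -
  let ?U = "UNIV - {0::'a}"
  have "x ^ card ?U * (\<Prod>y\<in>?U. y) = (\<Prod>y\<in>?U. x * y)"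
    by (simp add: prod.distrib)
  also have "\<dots> = (\<Prod>y\<in>?U. y)"
    by (rule prod.reindex_bij_witness[of _ "\<lambda>y. y / x" "\<lambda>y. x * y"]) (use assms in auto)
  finally have "x ^ card ?U = 1"
    by simp
  then show ?thesis
    by (simp add: card_Diff_singleton)
qed

lemma power_card_minus_1:
  fixes x :: "'a::{field,finite}"
  shows "x ^ (CARD('a) - 1) = (if x = 0 then 0 else 1)"
  using power_card_minus_1_eq_1[of x] card_UNIV_field_ge_2[where 'a = 'a] by (cases "x = 0") auto

lemma power_card_eq_self:
  fixes x :: "'a::{field,finite}"
  shows "x ^ CARD('a) = x"
proof -
  have "x ^ CARD('a) = x * x ^ (CARD('a) - 1)"
    using card_UNIV_field_ge_2[where 'a = 'a] by (simp flip: power_Suc)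
  then show ?thesis
    using card_UNIV_field_ge_2[where 'a = 'a] power_card_minus_1_eq_1[of x] by (cases "x = 0") simp_all
qed

lemma inverse_eq_power_card_minus_2:
  fixes x :: "'a::{field,finite}"
  assumes "x \<noteq> 0"
  shows "inverse x = x ^ (CARD('a) - 2)"
proof -
  have "Suc (CARD('a) - 2) = CARD('a) - 1"
    using card_UNIV_field_ge_2[where 'a = 'a] by simp
  then have "x * x ^ (CARD('a) - 2) = x ^ (CARD('a) - 1)"
    by (metis power_Suc)
  then show ?thesis
    using power_card_minus_1_eq_1[OF assms] assms by (simp add: field_simps)
qed

lemma polyfun_mono: "polyfun q I f \<Longrightarrow> I \<subseteq> J \<Longrightarrow> polyfun q J f"
  by (induction rule: polyfun.induct) (auto intro: polyfun.intros)

lemma polyfun_cong: "polyfun q I f \<Longrightarrow> (\<And>i. i \<in> I \<Longrightarrow> x $ i = y $ i) \<Longrightarrow> f x = f y"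
  by (induction rule: polyfun.induct) auto

lemma polyfun_reindex:
  "polyfun q I f \<Longrightarrow> (\<And>j. j \<in> I \<Longrightarrow> j < n) \<Longrightarrow>
     polyfun q (\<sigma> ` I) (\<lambda>y. f (vec n (\<lambda>j. y $ \<sigma> j)))"
  by (induction rule: polyfun.induct) (auto intro: polyfun.intros)

section \<open>The Frobenius of \<open>\<F>\<^bsub>q\<^sup>m\<^esub>\<close> over \<open>\<F>\<^sub>q\<close>\<close>

locale Fq_extension =
  fixes q m :: nat and field :: "'a::{field,finite} itself"
  assumes prime_power_q: "\<exists>p k. prime p \<and> k > 0 \<and> q = p ^ k"
    and m_pos: "m > 0"
    and card_field: "CARD('a) = q ^ m"
begin

lemma q_pos: "q > 0"
  using prime_power_q prime_gt_0_nat by auto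

lemma prime_CHAR: "prime CHAR('a)"
  by (intro prime_CHAR_semidom finite_imp_CHAR_pos) simp

lemma q_power_of_CHAR: "\<exists>k. q = CHAR('a) ^ k"
proof -
  obtain p k where p: "prime p" "k > 0" "q = p ^ k"
    using prime_power_q by blast
  have "CHAR('a) dvd p ^ (k * m)"
    using CHAR_dvd_CARD[where 'a = 'a] card_field p by (simp add: power_mult)
  then have "CHAR('a) dvd p"
    using prime_CHAR prime_dvd_power by blast
  then have "CHAR('a) = p"
    using p(1) prime_CHAR by (simp add: primes_dvd_imp_eq)
  then show ?thesis
    using p by blast
qed

lemma power_q_power_add: "((x::'a) + y) ^ q ^ k = x ^ q ^ k + y ^ q ^ k"
proof -
  obtain j where "q = CHAR('a) ^ j"
    using q_power_of_CHAR by blast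
  then have "q ^ k = CHAR('a) ^ (j * k)"
    by (simp add: power_mult)
  then show ?thesis
    by (rule freshmans_dream'[OF prime_CHAR])
qed

lemma power_q_power_sum: "(sum (f :: _ \<Rightarrow> 'a) A) ^ q ^ k = (\<Sum>i\<in>A. f i ^ q ^ k)"
  by (induction A rule: infinite_finite_induct) (auto simp: power_q_power_add q_pos)

lemma power_q_power_uminus: "(- (x::'a)) ^ q ^ k = - (x ^ q ^ k)"
proof -
  have "x ^ q ^ k + (- x) ^ q ^ k = 0"
    using power_q_power_add[of x "- x" k] q_pos by (simp add: power_0_left)
  then show ?thesis
    by (simp add: add_eq_0_iff)
qed

lemma power_q_power_diff: "((x::'a) - y) ^ q ^ k = x ^ q ^ k - y ^ q ^ k"
  using power_q_power_add[of x "- y" k] by (simp add: power_q_power_uminus)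

lemma power_q_power_power_q_power: "((x::'a) ^ q ^ j) ^ q ^ k = x ^ q ^ (j + k)"
  by (simp add: power_mult[symmetric] power_add mult.commute)

lemma power_q_power_m_mult: "(x::'a) ^ q ^ (m * c) = x"
proof (induction c)
  case (Suc c)
  have "x ^ q ^ (m * Suc c) = (x ^ q ^ (m * c)) ^ CARD('a)"
    by (simp add: card_field power_q_power_power_q_power add.commute)
  then show ?case
    using Suc power_card_eq_self by simp
qed simp

lemma Fq_0: "(0::'a) \<in> Fq q"
  using q_pos by (simp add: Fq_def)

lemma Fq_1: "(1::'a) \<in> Fq q"
  by (simp add: Fq_def)

lemma Fq_uminus: "(c::'a) \<in> Fq q \<Longrightarrow> - c \<in> Fq q"
  using power_q_power_uminus[of c 1] by (simp add: Fq_def)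

lemma Fq_power_q_power: "(c::'a) \<in> Fq q \<Longrightarrow> c ^ q ^ k = c"
proof (induction k)
  case (Suc k)
  then show ?case
    by (simp add: Fq_def power_mult flip: power_Suc2)
qed simp

definition frob_vec :: "nat \<Rightarrow> 'a vec \<Rightarrow> 'a vec" where
  "frob_vec k = map_vec (\<lambda>y. y ^ q ^ k)"

lemma gal_orbit_eq_range: "gal_orbit q x = range (\<lambda>k. frob_vec k x)"
  by (auto simp: gal_orbit_def frob_vec_def)

lemma frob_vec_frob_vec: "frob_vec j (frob_vec k x) = frob_vec (k + j) x"
  by (auto simp: frob_vec_def power_q_power_power_q_power)

lemma frob_vec_m_mult: "frob_vec (m * c) x = x"
  by (auto simp: frob_vec_def power_q_power_m_mult)

lemma gal_orbit_eq_if_mem: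
  assumes "y \<in> gal_orbit q (x :: 'a vec)"
  shows "gal_orbit q y = gal_orbit q x"
proof -
  obtain k where y: "y = frob_vec k x"
    using assms by (auto simp: gal_orbit_eq_range)
  have "k \<le> m * k"
    using m_pos by (cases m) auto
  then have "k + (m * k - k + j) = m * k + j" for j
    by linarith
  then have "frob_vec (m * k - k + j) y = frob_vec j (frob_vec (m * k) x)" for j
    by (simp only: y frob_vec_frob_vec)
  then have "frob_vec j x = frob_vec (m * k - k + j) y" for j
    by (simp add: frob_vec_m_mult)
  then show ?thesis
    unfolding gal_orbit_eq_range y by (auto simp: frob_vec_frob_vec)
qed

lemma polyfun_uminus: "polyfun q I (f :: 'a vec \<Rightarrow> 'a) \<Longrightarrow> polyfun q I (\<lambda>v. - f v)"
  using polyfun.pmult[OF polyfun.pconst[OF Fq_uminus[OF Fq_1]]] by fastforce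

lemma polyfun_diff:
  "polyfun q I (f :: 'a vec \<Rightarrow> 'a) \<Longrightarrow> polyfun q I g \<Longrightarrow> polyfun q I (\<lambda>v. f v - g v)"
  using polyfun.padd[OF _ polyfun_uminus] by fastforce

lemma polyfun_power: "polyfun q I (f :: 'a vec \<Rightarrow> 'a) \<Longrightarrow> polyfun q I (\<lambda>v. f v ^ k)"
  by (induction k) (auto intro: polyfun.pmult polyfun.pconst Fq_1)

lemma polyfun_frob_vec:
  "polyfun q I (f :: 'a vec \<Rightarrow> 'a) \<Longrightarrow> (\<And>i. i \<in> I \<Longrightarrow> i < dim_vec x) \<Longrightarrow>
     f (frob_vec k x) = f x ^ q ^ k"
  by (induction rule: polyfun.induct)
    (auto simp: frob_vec_def Fq_power_q_power power_q_power_add power_mult_distrib)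

lemma polyfun_poly:
  "(\<And>i. Polynomial.coeff P i \<in> Fq q) \<Longrightarrow> j \<in> I \<Longrightarrow> polyfun q I (\<lambda>x. poly (P :: 'a poly) (x $ j))"
proof (induction P rule: pCons_induct)
  case 0
  then show ?case
    using polyfun.pconst[OF Fq_0] by simp
next
  case (pCons a P)
  have "a \<in> Fq q" and "\<And>i. Polynomial.coeff P i \<in> Fq q"
    using pCons.prems(1)[of 0] pCons.prems(1)[of "Suc _"] by simp_all
  then have "polyfun q I (\<lambda>x. (\<lambda>_. a) x + (\<lambda>x. x $ j) x * poly P (x $ j))"
    using pCons by (intro polyfun.intros) auto
  then show ?case
    by simp
qed

text \<open>The values at \<open>v\<close> of polynomial functions form a subfield containing \<open>\<F>\<^sub>q\<close> and
  \<open>v $ j\<close>; inverses are powers.\<close>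

lemma polyfun_attains:
  assumes gen: "gen_field q {v $ j} = (UNIV :: 'a set)" and j: "j \<in> I"
  shows "\<exists>g. polyfun q I g \<and> g v = a"
proof -
  define S where "S = {g v | g. polyfun q I g}"
  have attained: "g v \<in> S" if "polyfun q I g" for g
    unfolding S_def using that by blast
  have "is_subfield S"
    unfolding is_subfield_def
  proof (intro conjI ballI impI)
    show "0 \<in> S" "1 \<in> S"
      using attained[OF polyfun.pconst[OF Fq_0]] attained[OF polyfun.pconst[OF Fq_1]] by simp_all
  next
    fix x y assume "x \<in> S" "y \<in> S"
    then obtain f g where "polyfun q I f" "x = f v" "polyfun q I g" "y = g v"
      unfolding S_def by blast
    then show "x + y \<in> S" "x * y \<in> S"
      using attained[OF polyfun.padd] attained[OF polyfun.pmult] by simp_all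
  next
    fix x assume "x \<in> S"
    then obtain f where f: "polyfun q I f" "x = f v"
      unfolding S_def by blast
    then show "- x \<in> S"
      using attained[OF polyfun_uminus] by simp
    assume "x \<noteq> 0"
    then show "inverse x \<in> S"
      using f attained[OF polyfun_power] by (simp add: inverse_eq_power_card_minus_2)
  qed
  moreover have "Fq q \<subseteq> S" "v $ j \<in> S"
    using attained[OF polyfun.pconst] attained[OF polyfun.pvar[OF j]] by auto
  ultimately have "gen_field q {v $ j} \<subseteq> S"
    unfolding gen_field_def by blast
  then have "a \<in> S"
    using gen by blast
  then show ?thesis
    unfolding S_def by auto
qed

lemma map_poly_power_q_mult:
  "map_poly (\<lambda>x. x ^ q) (p * p') = map_poly (\<lambda>x. x ^ q) p * map_poly (\<lambda>x. x ^ q) (p' :: 'a poly)"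
proof -
  have "(sum f A) ^ q = (\<Sum>i\<in>A. f i ^ q)" for f :: "nat \<Rightarrow> 'a" and A
    using power_q_power_sum[of f A 1] by simp
  then show ?thesis
    using q_pos
    by (intro poly_eqI) (simp add: Polynomial.coeff_map_poly Polynomial.coeff_mult power_mult_distrib)
qed

lemma coeff_in_Fq_if_map_poly_power_q:
  "map_poly (\<lambda>x. x ^ q) p = (p :: 'a poly) \<Longrightarrow> Polynomial.coeff p i \<in> Fq q"
  using q_pos Polynomial.coeff_map_poly[of "\<lambda>x. x ^ q" p i] by (simp add: Fq_def)

text \<open>The polynomial \<open>\<Prod>\<^sub>k (X - c\<^bsup>q\<^sup>k\<^esup>)\<close> is fixed by the Frobenius, hence has coefficients
  in \<open>\<F>\<^sub>q\<close>.\<close>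

lemma polyfun_conjugates_prod:
  fixes c :: 'a
  assumes "j \<in> I"
  shows "polyfun q I (\<lambda>x. \<Prod>k<m. x $ j - c ^ q ^ k)"
proof -
  define g where "g k = [:- (c ^ q ^ k), 1:]" for k
  have frob_g: "map_poly (\<lambda>x. x ^ q) (g k) = g (Suc k)" for k
    using q_pos power_q_power_uminus[of "c ^ q ^ k" 1] power_q_power_power_q_power[of c k 1]
    by (simp add: g_def map_poly_pCons)
  have frob_prod: "map_poly (\<lambda>x. x ^ q) (\<Prod>k<K. g k) = (\<Prod>k<K. g (Suc k))" for K
    by (induction K) (simp_all add: map_poly_1' map_poly_power_q_mult frob_g)
  obtain m' where m': "m = Suc m'"
    using m_pos gr0_implies_Suc by blast
  have "g m = g 0"
    using power_q_power_m_mult[of c 1] by (simp add: g_def)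
  have "map_poly (\<lambda>x. x ^ q) (\<Prod>k<m. g k) = (\<Prod>k<m'. g (Suc k)) * g m"
    unfolding frob_prod m' by (rule prod.lessThan_Suc)
  also have "\<dots> = (\<Prod>k<m. g k)"
    using \<open>g m = g 0\<close> unfolding m' prod.lessThan_Suc_shift by (simp add: mult.commute)
  finally have "map_poly (\<lambda>x. x ^ q) (\<Prod>k<m. g k) = (\<Prod>k<m. g k)" .
  then have "polyfun q I (\<lambda>x. poly (\<Prod>k<m. g k) (x $ j))"
    using polyfun_poly coeff_in_Fq_if_map_poly_power_q assms by blast
  then show ?thesis
    by (simp add: g_def poly_prod)
qed

end

section \<open>Elementary tame maps\<close>

definition perm_mat :: "nat \<Rightarrow> (nat \<Rightarrow> nat) \<Rightarrow> 'a::field mat" where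
  "perm_mat n \<sigma> = mat n n (\<lambda>(j, k). if k = \<sigma> j then 1 else 0)"

lemma perm_mat_mult_vec:
  assumes \<sigma>: "\<And>j. j < n \<Longrightarrow> \<sigma> j < n" and x: "x \<in> carrier_vec n"
  shows "perm_mat n \<sigma> *\<^sub>v x = vec n (\<lambda>j. x $ \<sigma> j)"
proof (rule eq_vecI)
  fix j assume "j < dim_vec (vec n (\<lambda>j. x $ \<sigma> j))"
  then have j: "j < n"
    by simp
  have "(perm_mat n \<sigma> *\<^sub>v x) $ j = (\<Sum>k = 0..<n. (if k = \<sigma> j then 1 else 0) * x $ k)"
    using j x by (simp add: perm_mat_def scalar_prod_def)
  also have "\<dots> = (\<Sum>k = 0..<n. if k = \<sigma> j then x $ k else 0)"
    by (rule sum.cong) auto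
  also have "\<dots> = x $ \<sigma> j"
    using \<sigma>[OF j] by simp
  finally show "(perm_mat n \<sigma> *\<^sub>v x) $ j = vec n (\<lambda>j. x $ \<sigma> j) $ j"
    using j by simp
qed (simp add: perm_mat_def)

lemma perm_mat_involution_square:
  assumes \<sigma>: "\<And>j. j < n \<Longrightarrow> \<sigma> j < n \<and> \<sigma> (\<sigma> j) = j"
  shows "perm_mat n \<sigma> * perm_mat n \<sigma> = (1\<^sub>m n :: 'a::field mat)"
proof (rule eq_matI)
  fix j k assume "j < dim_row (1\<^sub>m n :: 'a mat)" "k < dim_col (1\<^sub>m n :: 'a mat)"
  then have jk: "j < n" "k < n"
    by auto
  have "(perm_mat n \<sigma> * perm_mat n \<sigma>) $$ (j, k) =
      (\<Sum>l = 0..<n. (if l = \<sigma> j then 1 else 0) * (if k = \<sigma> l then 1 else (0::'a)))"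
    using jk by (simp add: perm_mat_def scalar_prod_def)
  also have "\<dots> = (\<Sum>l = 0..<n. if l = \<sigma> j then (if k = \<sigma> l then 1 else 0) else (0::'a))"
    by (rule sum.cong) auto
  also have "\<dots> = (if k = j then 1 else 0)"
    using \<sigma>[OF jk(1)] by simp
  finally show "(perm_mat n \<sigma> * perm_mat n \<sigma>) $$ (j, k) = (1\<^sub>m n :: 'a mat) $$ (j, k)"
    using jk by simp
qed (auto simp: perm_mat_def)

lemma det_perm_mat_involution:
  assumes "\<And>j. j < n \<Longrightarrow> \<sigma> j < n \<and> \<sigma> (\<sigma> j) = j"
  shows "det (perm_mat n \<sigma> :: 'a::field mat) \<noteq> 0"
proof -
  have "det (perm_mat n \<sigma> * perm_mat n \<sigma> :: 'a mat) = det (perm_mat n \<sigma>) * det (perm_mat n \<sigma>)"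
    by (rule det_mult) (auto simp: perm_mat_def)
  then have "det (perm_mat n \<sigma> :: 'a mat) * det (perm_mat n \<sigma>) = 1"
    by (simp add: perm_mat_involution_square[OF assms])
  then show ?thesis
    by (metis mult_zero_left zero_neq_one)
qed

lemma update_vec_carrier [simp]: "v \<in> carrier_vec n \<Longrightarrow> v |\<^sub>v i \<mapsto> a \<in> carrier_vec n"
  by (metis carrier_vecD carrier_vecI dim_update_vec)

definition transposition_map :: "nat \<Rightarrow> nat \<Rightarrow> 'a::field vec \<Rightarrow> 'a vec" where
  "transposition_map n i x = perm_mat n (Transposition.transpose 0 i) *\<^sub>v x + 0\<^sub>v n"

definition shift_first :: "nat \<Rightarrow> ('a vec \<Rightarrow> 'a) \<Rightarrow> 'a::field vec \<Rightarrow> 'a vec" where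
  "shift_first n g = (\<lambda>x. vec n (\<lambda>j. 1 * x $ j + (if j = 0 then g x else 0)))"

text \<open>Triangular maps can only shift \<open>X\<^sub>0\<close> by a polynomial in the other variables, so
  \<open>X\<^sub>i \<mapsto> X\<^sub>i + g\<close> is obtained by conjugating with the transposition of \<open>X\<^sub>0\<close> and \<open>X\<^sub>i\<close>.\<close>

definition elementary_map :: "nat \<Rightarrow> nat \<Rightarrow> ('a vec \<Rightarrow> 'a) \<Rightarrow> 'a::field vec \<Rightarrow> 'a vec" where
  "elementary_map n i g = transposition_map n i \<circ>
     shift_first n (\<lambda>y. g (vec n (\<lambda>j. y $ Transposition.transpose 0 i j))) \<circ> transposition_map n i"

lemma elementary_map_apply:
  assumes x: "x \<in> carrier_vec n" and i: "i < n"
  shows "elementary_map n i g x = x |\<^sub>v i \<mapsto> x $ i + g x"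
proof -
  let ?s = "Transposition.transpose 0 i"
  have s_lt: "?s j < n" if "j < n" for j
    using that i by (simp add: transpose_def)
  have swap: "transposition_map n i y = vec n (\<lambda>j. y $ ?s j)" if "y \<in> carrier_vec n" for y
    using perm_mat_mult_vec[OF s_lt that] by (simp add: transposition_map_def)
  have unswap: "vec n (\<lambda>j. vec n (\<lambda>j. x $ ?s j) $ ?s j) = x"
    using x s_lt by (intro eq_vecI) auto
  have shifted: "shift_first n (\<lambda>y. g (vec n (\<lambda>j. y $ ?s j))) (vec n (\<lambda>j. x $ ?s j)) =
      vec n (\<lambda>j. x $ ?s j + (if j = 0 then g x else 0))"
    unfolding shift_first_def unswap by (intro eq_vecI) simp_all
  have "elementary_map n i g x = vec n (\<lambda>j. x $ ?s (?s j) + (if ?s j = 0 then g x else 0))"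
    using x s_lt by (intro eq_vecI) (simp_all add: elementary_map_def swap shifted)
  also have "\<dots> = x |\<^sub>v i \<mapsto> x $ i + g x"
    using x i by (intro eq_vecI) (auto simp: transpose_def)
  finally show ?thesis .
qed

context Fq_extension
begin

lemma tame_transposition_map:
  assumes "i < n"
  shows "tame q n (transposition_map n i :: 'a vec \<Rightarrow> 'a vec)"
proof -
  have "det (perm_mat n (Transposition.transpose 0 i) :: 'a mat) \<noteq> 0"
    using assms by (intro det_perm_mat_involution) (simp add: transpose_def)
  then show ?thesis
    unfolding transposition_map_def[abs_def]
    by (intro tame.affine) (auto simp: perm_mat_def Fq_0 Fq_1)
qed

lemma tame_shift_first:
  assumes "polyfun q {1..<n} (g :: 'a vec \<Rightarrow> 'a)"
  shows "tame q n (shift_first n g)"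
proof -
  have "polyfun q {Suc j..<n} (\<lambda>x. if j = 0 then g x else 0)" for j
    using assms by (cases "j = 0") (auto intro: polyfun.pconst Fq_0)
  then show ?thesis
    unfolding shift_first_def by (intro tame.triangular) (simp add: Fq_1)
qed

lemma tame_elementary_map:
  assumes i: "i < n" and g: "polyfun q ({..<n} - {i}) (g :: 'a vec \<Rightarrow> 'a)"
  shows "tame q n (elementary_map n i g)"
proof -
  have "polyfun q (Transposition.transpose 0 i ` ({..<n} - {i}))
      (\<lambda>y. g (vec n (\<lambda>j. y $ Transposition.transpose 0 i j)))"
    by (rule polyfun_reindex[OF g]) auto
  moreover have "Transposition.transpose 0 i ` ({..<n} - {i}) \<subseteq> {1..<n}"
    using i by (auto simp: transpose_def)
  ultimately show ?thesis
    unfolding elementary_map_def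
    by (intro tame.comp tame_transposition_map tame_shift_first i) (rule polyfun_mono)
qed

section \<open>Separating points by polynomials\<close>

definition separates :: "nat set \<Rightarrow> 'a vec \<Rightarrow> 'a vec \<Rightarrow> bool" where
  "separates I v u \<longleftrightarrow> (\<exists>h. polyfun q I h \<and> h v = 1 \<and> h u = 0)"

lemma separates_mono: "separates I v u \<Longrightarrow> I \<subseteq> J \<Longrightarrow> separates J v u"
  unfolding separates_def using polyfun_mono by blast

lemma separatesI_nonzero:
  assumes "polyfun q I f" "f u = 0" "f v \<noteq> 0"
  shows "separates I v u"
proof -
  have "f v ^ (CARD('a) - 1) = 1" "f u ^ (CARD('a) - 1) = 0"
    using assms power_card_minus_1[of "f v"] power_card_minus_1[of "f u"] by simp_all
  then show ?thesis
    unfolding separates_def using polyfun_power[OF assms(1)] by blast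
qed

lemma separatesI_zero:
  assumes "polyfun q I f" "f v = 0" "f u \<noteq> 0"
  shows "separates I v u"
proof -
  have "1 - f v ^ (CARD('a) - 1) = 1" "1 - f u ^ (CARD('a) - 1) = 0"
    using assms power_card_minus_1[of "f v"] power_card_minus_1[of "f u"] by simp_all
  moreover have "polyfun q I (\<lambda>x. 1 - f x ^ (CARD('a) - 1))"
    by (intro polyfun_diff polyfun_power polyfun.pconst Fq_1 assms(1))
  ultimately show ?thesis
    unfolding separates_def by blast
qed

lemma separates_coord:
  assumes "l \<in> I" "v $ l \<in> Fq q" "u $ l \<noteq> v $ l"
  shows "separates I v u"
  using assms by (intro separatesI_zero[where f = "\<lambda>x. x $ l - v $ l"])
    (auto intro: polyfun_diff polyfun.pvar polyfun.pconst)

lemma separates_not_conjugate: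
  assumes "j \<in> I" "\<forall>k. v $ j \<noteq> (u $ j) ^ q ^ k"
  shows "separates I v u"
  by (rule separatesI_nonzero[OF polyfun_conjugates_prod[OF assms(1), of "u $ j"]])
    (use assms m_pos in \<open>auto intro!: bexI[of _ 0]\<close>)

text \<open>Write \<open>v\<^sub>l = G(v\<^sub>j)\<close> with \<open>G \<in> \<F>\<^sub>q[X]\<close>. Since \<open>G\<close> commutes with the Frobenius,
  \<open>X\<^sub>l - G(X\<^sub>j)\<close> vanishes at \<open>u\<close> only if \<open>v\<^sub>l\<close> is the \<open>k\<close>-th conjugate of \<open>u\<^sub>l\<close>, which
  fails for some \<open>l\<close>.\<close>

lemma separates_conjugate:
  assumes u: "u \<in> carrier_vec n" and v: "v \<in> carrier_vec n" and j: "j < n"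
    and gen: "gen_field q {v $ j} = UNIV"
    and k: "v $ j = (u $ j) ^ q ^ k" and ne: "v \<noteq> frob_vec k u"
  shows "\<exists>l<n. l \<noteq> j \<and> separates {j, l} v u"
proof -
  have "\<exists>l<n. v $ l \<noteq> (u $ l) ^ q ^ k"
  proof (rule ccontr)
    assume "\<not> ?thesis"
    then have "v = frob_vec k u"
      using u v by (intro eq_vecI) (auto simp: frob_vec_def)
    then show False
      using ne by blast
  qed
  then obtain l where l: "l < n" "v $ l \<noteq> (u $ l) ^ q ^ k"
    by blast
  then have "l \<noteq> j"
    using k by auto
  obtain G where G: "polyfun q {j} G" "G v = v $ l"
    using polyfun_attains[OF gen, of "{j}" "v $ l"] by blast
  have "G (frob_vec k u) = G v"
    using u j k by (intro polyfun_cong[OF G(1)]) (simp add: frob_vec_def)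
  then have "(u $ l - G u) ^ q ^ k = (u $ l) ^ q ^ k - v $ l"
    using polyfun_frob_vec[OF G(1), of u k] u j l G(2) by (simp add: power_q_power_diff)
  then have "u $ l - G u \<noteq> 0"
    using l q_pos by (auto simp: power_0_left)
  moreover have "polyfun q {j, l} (\<lambda>x. x $ l - G x)"
    using G(1) by (auto intro: polyfun_diff polyfun.pvar polyfun_mono)
  ultimately show ?thesis
    using l \<open>l \<noteq> j\<close> G(2) by (intro exI[of _ l]) (auto intro: separatesI_zero)
qed

lemma separates_off_orbit:
  assumes u: "u \<in> carrier_vec n" and v: "v \<in> carrier_vec n" and n: "n \<ge> 3"
    and gen: "gen_field q {v $ 0} = UNIV" and off: "v \<notin> gal_orbit q u"
  shows "\<exists>i\<in>{1, 2}. separates ({..<n} - {i}) v u"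
proof (cases "\<exists>k. v $ 0 = (u $ 0) ^ q ^ k")
  case True
  then obtain k where k: "v $ 0 = (u $ 0) ^ q ^ k"
    by blast
  have "v \<noteq> frob_vec k u"
    using off by (auto simp: gal_orbit_eq_range)
  then obtain l where l: "l < n" "l \<noteq> 0" "separates {0, l} v u"
    using separates_conjugate[OF u v _ gen k] n by auto
  have "\<exists>i::nat \<in> {1, 2}. i \<noteq> l"
    by (cases "l = 1") auto
  then obtain i :: nat where i: "i \<in> {1, 2}" "i \<noteq> l"
    by blast
  then have "{0, l} \<subseteq> {..<n} - {i}"
    using l n by auto
  then show ?thesis
    using separates_mono[OF l(3)] i by blast
next
  case False
  then have "separates {0} v u"
    by (intro separates_not_conjugate) auto
  then show ?thesis
    using separates_mono[of "{0}" v u "{..<n} - {1}"] n by auto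
qed

section \<open>Admissible maps and a normal form\<close>

definition admissible :: "nat \<Rightarrow> 'a vec \<Rightarrow> ('a vec \<Rightarrow> 'a vec) \<Rightarrow> bool" where
  "admissible n u F \<longleftrightarrow> tame q n F \<and> F ` carrier_vec n \<subseteq> carrier_vec n \<and>
     inj_on F (carrier_vec n) \<and> (\<forall>x\<in>carrier_vec n. \<forall>k. F (frob_vec k x) = frob_vec k (F x)) \<and>
     F u = u"

lemma admissible_comp: "admissible n u F \<Longrightarrow> admissible n u G \<Longrightarrow> admissible n u (F \<circ> G)"
  unfolding admissible_def
  by (auto intro: tame.comp comp_inj_on inj_on_subset simp: image_subset_iff)

lemma admissible_id: "u \<in> carrier_vec n \<Longrightarrow> admissible n u (\<lambda>x. 1\<^sub>m n *\<^sub>v x + 0\<^sub>v n)"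
  unfolding admissible_def frob_vec_def
  by (auto intro!: tame.affine inj_onI simp: Fq_0 Fq_1)

lemma admissible_elementary_map:
  assumes u: "u \<in> carrier_vec n" and i: "i < n"
    and g: "polyfun q ({..<n} - {i}) (g :: 'a vec \<Rightarrow> 'a)" and gu: "g u = 0"
  shows "admissible n u (elementary_map n i g)"
  unfolding admissible_def
proof (intro conjI ballI allI)
  show "tame q n (elementary_map n i g)"
    by (rule tame_elementary_map[OF i g])
  show "elementary_map n i g ` carrier_vec n \<subseteq> carrier_vec n"
    using i by (auto simp: elementary_map_apply)
  show "elementary_map n i g u = u"
    using u i gu by (simp add: elementary_map_apply) (intro eq_vecI; simp add: update_vec_def)
next
  show "inj_on (elementary_map n i g) (carrier_vec n)"
  proof (rule inj_onI)
    fix x y :: "'a vec"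
    assume x: "x \<in> carrier_vec n" and y: "y \<in> carrier_vec n"
      and "elementary_map n i g x = elementary_map n i g y"
    then have eq: "x |\<^sub>v i \<mapsto> x $ i + g x = y |\<^sub>v i \<mapsto> y $ i + g y"
      using i by (simp add: elementary_map_apply)
    have other: "x $ j = y $ j" if "j \<noteq> i" for j
      using arg_cong[OF eq, of "\<lambda>w. w $ j"] that by simp
    then have "g x = g y"
      by (intro polyfun_cong[OF g]) auto
    moreover have "x $ i + g x = y $ i + g y"
      using arg_cong[OF eq, of "\<lambda>w. w $ i"] x y i by simp
    ultimately show "x = y"
      using x y other by (intro eq_vecI) (auto, metis add_right_cancel)
  qed
next
  fix x :: "'a vec" and k
  assume x: "x \<in> carrier_vec n"
  have "g (frob_vec k x) = g x ^ q ^ k"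
    using x by (intro polyfun_frob_vec[OF g]) auto
  moreover have "frob_vec k x \<in> carrier_vec n"
    using x by (simp add: frob_vec_def)
  ultimately show "elementary_map n i g (frob_vec k x) = frob_vec k (elementary_map n i g x)"
    using x i by (simp add: elementary_map_apply frob_vec_def update_vec_def power_q_power_add)
      (intro eq_vecI; simp add: power_q_power_add)
qed

lemma admissible_image_gal_orbit:
  assumes "admissible n u F" "x \<in> carrier_vec n"
  shows "F ` gal_orbit q x = gal_orbit q (F x)"
proof -
  have "F (frob_vec k x) = frob_vec k (F x)" for k
    using assms unfolding admissible_def by blast
  then show ?thesis
    unfolding gal_orbit_eq_range image_image by simp
qed

lemma gal_orbit_subset_carrier: "(x :: 'a vec) \<in> carrier_vec n \<Longrightarrow> gal_orbit q x \<subseteq> carrier_vec n"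
  by (auto simp: gal_orbit_eq_range frob_vec_def)

definition reachable :: "nat \<Rightarrow> 'a vec \<Rightarrow> 'a vec \<Rightarrow> 'a vec \<Rightarrow> bool" where
  "reachable n u v w \<longleftrightarrow> (\<exists>F. admissible n u F \<and> F v = w)"

lemma reachable_refl: "u \<in> carrier_vec n \<Longrightarrow> v \<in> carrier_vec n \<Longrightarrow> reachable n u v v"
  unfolding reachable_def by (intro exI[of _ "\<lambda>x. 1\<^sub>m n *\<^sub>v x + 0\<^sub>v n"]) (simp add: admissible_id)

lemma reachable_trans:
  assumes "reachable n u v w" "reachable n u w x"
  shows "reachable n u v x"
proof -
  obtain F G where "admissible n u F" "F v = w" "admissible n u G" "G w = x"
    using assms unfolding reachable_def by blast
  then show ?thesis
    unfolding reachable_def by (intro exI[of _ "G \<circ> F"]) (simp add: admissible_comp)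
qed

text \<open>The polynomial \<open>g\<close> corrects coordinate \<open>i\<close> of \<open>v\<close>; multiplying it by the separating
  function keeps \<open>u\<close> fixed.\<close>

lemma reachable_update:
  assumes u: "u \<in> carrier_vec n" and v: "v \<in> carrier_vec n" and i: "i < n"
    and j: "j < n" "j \<noteq> i" and gen: "gen_field q {v $ j} = UNIV"
    and sep: "separates ({..<n} - {i}) v u"
  shows "reachable n u v (v |\<^sub>v i \<mapsto> a)"
proof -
  obtain h where h: "polyfun q ({..<n} - {i}) h" "h v = 1" "h u = 0"
    using sep unfolding separates_def by blast
  obtain g where g: "polyfun q ({..<n} - {i}) g" "g v = a - v $ i"
    using polyfun_attains[OF gen, of "{..<n} - {i}" "a - v $ i"] j by blast
  have "admissible n u (elementary_map n i (\<lambda>x. g x * h x))"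
    using h(3) by (intro admissible_elementary_map[OF u i] polyfun.pmult g(1) h(1)) simp
  moreover have "elementary_map n i (\<lambda>x. g x * h x) v = v |\<^sub>v i \<mapsto> a"
    using v i by (simp add: elementary_map_apply g h)
  ultimately show ?thesis
    unfolding reachable_def by blast
qed

lemma reachable_if_agree:
  assumes u: "u \<in> carrier_vec n" and w: "w \<in> carrier_vec n" and w': "w' \<in> carrier_vec n"
    and ij: "i < n" "j < n" "i \<noteq> j"
    and wi: "w $ i \<in> Fq q" "u $ i \<noteq> w $ i" and gen: "gen_field q {w $ j} = UNIV"
    and agree: "w' $ i = w $ i" "w' $ j = w $ j"
  shows "reachable n u w w'"
proof -
  have partial: "reachable n u w (vec n (\<lambda>t. if t \<in> K then w' $ t else w $ t))"
    if "K \<subseteq> {..<n} - {i, j}" for K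
  proof -
    have "finite K"
      using that finite_subset by blast
    then show ?thesis
      using that
    proof (induction K rule: finite_induct)
      case empty
      have "vec n (\<lambda>t. if t \<in> {} then w' $ t else w $ t) = w"
        using w by auto
      then show ?case
        using reachable_refl[OF u w] by simp
    next
      case (insert t K)
      let ?x = "vec n (\<lambda>t. if t \<in> K then w' $ t else w $ t)"
      have x: "?x \<in> carrier_vec n" "?x $ i = w $ i" "?x $ j = w $ j"
        using insert.prems ij by auto
      have "reachable n u ?x (?x |\<^sub>v t \<mapsto> w' $ t)"
        using insert.prems ij wi gen x
        by (intro reachable_update[OF u x(1), of t j] separates_coord[of i]) auto
      moreover have "?x |\<^sub>v t \<mapsto> w' $ t = vec n (\<lambda>s. if s \<in> insert t K then w' $ s else w $ s)"
        using insert.hyps by (intro eq_vecI) (auto simp: update_vec_def)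
      ultimately show ?case
        using insert reachable_trans by fastforce
    qed
  qed
  have "vec n (\<lambda>t. if t \<in> {..<n} - {i, j} then w' $ t else w $ t) = w'"
    using w' agree by (intro eq_vecI) auto
  then show ?thesis
    using partial[OF order_refl] by simp
qed

definition avoid :: "'a vec \<Rightarrow> nat \<Rightarrow> 'a" where
  "avoid u l = (if u $ l = 0 then 1 else 0)"

lemma avoid_in_Fq: "avoid u l \<in> Fq q"
  by (simp add: avoid_def Fq_0 Fq_1)

lemma avoid_neq: "u $ l \<noteq> avoid u l"
  by (simp add: avoid_def)

definition target :: "nat \<Rightarrow> 'a vec \<Rightarrow> 'a \<Rightarrow> 'a vec" where
  "target n u z = vec n (\<lambda>t. if t = 0 then avoid u 0 else if t \<le> 2 then z else 0)"

lemma reachable_target_from_avoid: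
  assumes u: "u \<in> carrier_vec n" and w: "w \<in> carrier_vec n" and n: "n \<ge> 3"
    and i: "i \<in> {1, 2}" and wi: "w $ i = avoid u i"
    and gen: "gen_field q {w $ 0} = UNIV" and z: "gen_field q {z} = UNIV"
  shows "reachable n u w (target n u z)"
proof -
  define k where "k = 3 - i"
  have ik: "i < n" "k < n" "i \<noteq> 0" "k \<noteq> 0" "i \<noteq> k" "i \<le> 2" "k \<le> 2"
    using i n by (auto simp: k_def)
  define w1 where "w1 = vec n (\<lambda>t. if t = 0 then w $ 0 else if t = i then avoid u i
      else if t = k then z else 0)"
  define w2 where "w2 = vec n (\<lambda>t. if t = 0 then avoid u 0 else if t = i then avoid u i
      else if t = k then z else 0)"
  have w1: "w1 \<in> carrier_vec n" "w1 $ 0 = w $ 0" "w1 $ i = avoid u i" "w1 $ k = z"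
    using ik by (simp_all add: w1_def)
  have w2: "w2 \<in> carrier_vec n" "w2 $ 0 = avoid u 0" "w2 $ i = avoid u i" "w2 $ k = z"
    using ik by (simp_all add: w2_def)
  have T: "target n u z \<in> carrier_vec n" "target n u z $ 0 = avoid u 0" "target n u z $ k = z"
    using ik by (simp_all add: target_def)
  have "reachable n u w w1"
    using ik wi gen w1 avoid_in_Fq avoid_neq by (intro reachable_if_agree[OF u w w1(1), of i 0]) simp_all
  moreover have "reachable n u w1 w2"
    using ik z w1 w2 avoid_in_Fq avoid_neq by (intro reachable_if_agree[OF u w1(1) w2(1), of i k]) simp_all
  moreover have "reachable n u w2 (target n u z)"
    using ik z w2 T avoid_in_Fq avoid_neq
    by (intro reachable_if_agree[OF u w2(1) T(1), of 0 k]) simp_all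
  ultimately show ?thesis
    using reachable_trans by blast
qed

lemma reachable_target:
  assumes u: "u \<in> carrier_vec n" and v: "v \<in> carrier_vec n" and n: "n \<ge> 3"
    and gen: "gen_field q {v $ 0} = UNIV" and off: "v \<notin> gal_orbit q u"
    and z: "gen_field q {z} = UNIV"
  shows "reachable n u v (target n u z)"
proof -
  obtain i where i: "i \<in> {1, 2}" "separates ({..<n} - {i}) v u"
    using separates_off_orbit[OF u v n gen off] by blast
  then have "reachable n u v (v |\<^sub>v i \<mapsto> avoid u i)"
    using n by (intro reachable_update[OF u v _ _ _ gen]) auto
  moreover have "reachable n u (v |\<^sub>v i \<mapsto> avoid u i) (target n u z)"
    using v n i gen by (intro reachable_target_from_avoid[OF u _ n i(1) _ _ z]) auto
  ultimately show ?thesis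
    by (rule reachable_trans)
qed

lemma tame_map_of_common_target:
  assumes "reachable n u r t" "reachable n u s t"
    and r: "r \<in> carrier_vec n" and s: "s \<in> carrier_vec n" and u: "u \<in> carrier_vec n"
  shows "\<exists>F. tame q n F \<and> F ` gal_orbit q r = gal_orbit q s \<and> F ` gal_orbit q u = gal_orbit q u"
proof -
  obtain Er Es where Er: "admissible n u Er" "Er r = t" and Es: "admissible n u Es" "Es s = t"
    using assms(1,2) unfolding reachable_def by blast
  define F where "F = inv_into (carrier_vec n) Es \<circ> Er"
  have "F ` gal_orbit q x = gal_orbit q y"
    if "x \<in> carrier_vec n" "y \<in> carrier_vec n" "Er x = Es y" for x y
  proof -
    have "F ` gal_orbit q x = inv_into (carrier_vec n) Es ` Es ` gal_orbit q y"
      unfolding F_def image_comp[symmetric]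
      using that admissible_image_gal_orbit[OF Er(1)] admissible_image_gal_orbit[OF Es(1)] by simp
    also have "\<dots> = gal_orbit q y"
      using Es(1) gal_orbit_subset_carrier[OF that(2)] by (simp add: admissible_def)
    finally show ?thesis .
  qed
  moreover have "tame q n F"
    using Er(1) Es(1) unfolding F_def admissible_def by (blast intro: tame.comp tame.inverse)
  moreover have "Er u = Es u"
    using Er(1) Es(1) by (simp add: admissible_def)
  ultimately show ?thesis
    using r s u Er(2) Es(2) by metis
qed

end

theorem mainTheorem12:
  fixes q m n :: nat and s r u :: "'a::{field,finite} vec"
  assumes "\<exists>p k. prime p \<and> k > 0 \<and> q = p ^ k"
    and "m > 0"
    and "card (UNIV :: 'a set) = q ^ m"
    and "n \<ge> 3"
    and "s \<in> calX q m n" and "r \<in> calX q m n" and "u \<in> calX q m n"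
    and "gal_orbit q s \<noteq> gal_orbit q r"
    and "gal_orbit q s \<noteq> gal_orbit q u"
    and "gal_orbit q r \<noteq> gal_orbit q u"
    and "gen_field q {r $ 0} = UNIV"
    and "gen_field q {s $ 0} = UNIV"
  shows "\<exists>F. tame q n F \<and> F ` gal_orbit q r = gal_orbit q s \<and> F ` gal_orbit q u = gal_orbit q u"
proof -
  interpret Fq_extension q m "TYPE('a)"
    using assms(1-3) by unfold_locales
  have carrier: "r \<in> carrier_vec n" "s \<in> carrier_vec n" "u \<in> carrier_vec n"
    using assms(5-7) by (auto simp: calX_def)
  have "r \<notin> gal_orbit q u" "s \<notin> gal_orbit q u"
    using assms(9,10) gal_orbit_eq_if_mem by metis+
  then have "reachable n u r (target n u (r $ 0))" "reachable n u s (target n u (r $ 0))"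
    using reachable_target carrier assms(4,11,12) by blast+
  then show ?thesis
    using tame_map_of_common_target carrier by blast
qed

end
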